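(* Let $G$ be a graph such that (i) $G[N[v]]$ is a unit interval graph for every $v\in V(G)$, (ii) $G$ has no induced subgraph isomorphic to $C_{n+4}\cup K_1$ for any $n\ge0$, and (iii) there are no $v,w\in V(G)$ with $N[v]\subsetneq N[w]$. Then $G$ has no induced subgraph isomorphic to the net.
   Context: A unit interval graph is an intersection graph of unit-length intervals on the real line. $C_m$ is the cycle of length $m$, $K_1$ a single vertex, $\cup$ disjoint union. The net is the graph on $v_1,v_2,v_3,w_1,w_2,w_3$ with edges $v_1v_2,v_1v_3,v_2v_3,v_1w_1,v_2w_2,v_3w_3$. $N[v]$ is the closed neighborhood. *)

theory Defs
  imports Complex_Main
begin

definition graph :: "'a set \<Rightarrow> ('a \<Rightarrow> 'a \<Rightarrow> bool) \<Rightarrow> bool" where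
  "graph V E \<longleftrightarrow> finite V \<and> (\<forall>u v. E u v \<longrightarrow> u \<in> V \<and> v \<in> V)
      \<and> (\<forall>u v. E u v \<longrightarrow> E v u) \<and> (\<forall>v. \<not> E v v)"

definition closed_nbhd :: "'a set \<Rightarrow> ('a \<Rightarrow> 'a \<Rightarrow> bool) \<Rightarrow> 'a \<Rightarrow> 'a set" where
  "closed_nbhd V E v = {u \<in> V. u = v \<or> E v u}"

definition unit_interval_on :: "'a set \<Rightarrow> ('a \<Rightarrow> 'a \<Rightarrow> bool) \<Rightarrow> bool" where
  "unit_interval_on S E \<longleftrightarrow> (\<exists>a :: 'a \<Rightarrow> real. \<forall>u\<in>S. \<forall>w\<in>S. u \<noteq> w \<longrightarrow>
      (E u w \<longleftrightarrow> {a u .. a u + 1} \<inter> {a w .. a w + 1} \<noteq> {}))"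

definition has_induced :: "'a set \<Rightarrow> ('a \<Rightarrow> 'a \<Rightarrow> bool) \<Rightarrow> 'b set \<Rightarrow> ('b \<Rightarrow> 'b \<Rightarrow> bool) \<Rightarrow> bool" where
  "has_induced V E W F \<longleftrightarrow> (\<exists>f. inj_on f W \<and> f ` W \<subseteq> V \<and>
      (\<forall>x\<in>W. \<forall>y\<in>W. F x y \<longleftrightarrow> E (f x) (f y)))"

text \<open>C_m \<union> K_1 with m = n+4: cycle on 0..m-1, isolated vertex m.\<close>
definition cycle_plus_K1_V :: "nat \<Rightarrow> nat set" where
  "cycle_plus_K1_V m = {0..m}"

definition cycle_plus_K1_E :: "nat \<Rightarrow> nat \<Rightarrow> nat \<Rightarrow> bool" where
  "cycle_plus_K1_E m i j \<longleftrightarrow> i < m \<and> j < m \<and> (j = (i + 1) mod m \<or> i = (j + 1) mod m)"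

text \<open>The net: v1,v2,v3 = 0,1,2 (triangle), w1,w2,w3 = 3,4,5 pendant at 0,1,2.\<close>
definition net_V :: "nat set" where "net_V = {0..5}"

definition net_E :: "nat \<Rightarrow> nat \<Rightarrow> bool" where
  "net_E i j \<longleftrightarrow> {i, j} \<in> {{0,1},{0,2},{1,2},{0,3},{1,4},{2,5}}"

end

theory Submission
  imports Defs
begin

(*
  Condition (i) makes G claw-free: in a unit interval model of N[x], the leaves of a claw
  centred at x would be three pairwise disjoint unit intervals all meeting the interval of x.

  Given an induced net, grow an induced path v1 w1 ... u that avoids v2, v3, w2, w3, has no
  neighbour among w2, w3, and none among v2, v3 except v1. The closed neighbourhoods of u and
  of its predecessor differ, so by (iii) u has a neighbour q not adjacent to the predecessor.
  If q had a further neighbour on the path, or among v2, w2 (resp. v3, w3), then q would close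
  a hole of length at least 4 with a segment of the path, extended at v1 by v2 or by v2, w2
  (resp. v3, w3). Claw-freeness at q, with u as one leaf, shows that w3 or w2 is adjacent
  neither to q nor to that hole, contradicting (ii). Hence q extends the path, which thus
  grows beyond the size of the finite graph.
*)

lemma unit_intervals_intersect_iff:
  "{a..a + 1} \<inter> {b..b + 1} \<noteq> {} \<longleftrightarrow> \<bar>a - b\<bar> \<le> (1::real)"
proof
  assume "{a..a + 1} \<inter> {b..b + 1} \<noteq> {}"
  then show "\<bar>a - b\<bar> \<le> 1" by auto
next
  assume "\<bar>a - b\<bar> \<le> 1"
  then have "max a b \<in> {a..a + 1} \<inter> {b..b + 1}" by (auto simp: max_def)
  then show "{a..a + 1} \<inter> {b..b + 1} \<noteq> {}" by blast
qed

definition claw_free :: "('a \<Rightarrow> 'a \<Rightarrow> bool) \<Rightarrow> bool" where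
  "claw_free E \<longleftrightarrow> (\<forall>x y1 y2 y3. E x y1 \<and> E x y2 \<and> E x y3 \<and> y1 \<noteq> y2 \<and> y1 \<noteq> y3 \<and> y2 \<noteq> y3
      \<longrightarrow> E y1 y2 \<or> E y1 y3 \<or> E y2 y3)"

lemma claw_freeD:
  assumes "claw_free E" "E x y1" "E x y2" "E x y3" "y1 \<noteq> y2" "y1 \<noteq> y3" "y2 \<noteq> y3"
  shows "E y1 y2 \<or> E y1 y3 \<or> E y2 y3"
  using assms unfolding claw_free_def by blast

lemma claw_free_if_unit_interval_nbhds:
  assumes graph: "graph V E" and nbhds: "\<forall>v\<in>V. unit_interval_on (closed_nbhd V E v) E"
  shows "claw_free E"
  unfolding claw_free_def
proof (intro allI impI)
  fix x y1 y2 y3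
  assume claw: "E x y1 \<and> E x y2 \<and> E x y3 \<and> y1 \<noteq> y2 \<and> y1 \<noteq> y3 \<and> y2 \<noteq> y3"
  have x: "x \<in> V" and leaves: "{x, y1, y2, y3} \<subseteq> closed_nbhd V E x" and "x \<notin> {y1, y2, y3}"
    using graph claw unfolding graph_def closed_nbhd_def by auto
  obtain a :: "'a \<Rightarrow> real" where a: "\<forall>u\<in>closed_nbhd V E x. \<forall>w\<in>closed_nbhd V E x.
      u \<noteq> w \<longrightarrow> (E u w \<longleftrightarrow> \<bar>a u - a w\<bar> \<le> 1)"
    using nbhds x unfolding unit_interval_on_def unit_intervals_intersect_iff by blast
  have "\<bar>a x - a y1\<bar> \<le> 1" "\<bar>a x - a y2\<bar> \<le> 1" "\<bar>a x - a y3\<bar> \<le> 1"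
    using a leaves claw \<open>x \<notin> {y1, y2, y3}\<close> by auto
  then have "\<bar>a y1 - a y2\<bar> \<le> 1 \<or> \<bar>a y1 - a y3\<bar> \<le> 1 \<or> \<bar>a y2 - a y3\<bar> \<le> 1" by arith
  then show "E y1 y2 \<or> E y1 y3 \<or> E y2 y3"
    using a leaves claw by auto
qed

locale simple_graph =
  fixes V :: "'a set" and E :: "'a \<Rightarrow> 'a \<Rightarrow> bool"
  assumes graph: "graph V E"
begin

lemma adj_sym: "E x y \<longleftrightarrow> E y x"
  using graph unfolding graph_def by blast

lemma adj_irrefl [simp]: "\<not> E x x"
  using graph unfolding graph_def by blast

lemma adj_in_V: "E x y \<Longrightarrow> x \<in> V" "E x y \<Longrightarrow> y \<in> V"
  using graph unfolding graph_def by blast+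

lemma finite_V: "finite V"
  using graph unfolding graph_def by blast

end

lemma cycle_plus_K1_E_iff:
  assumes "i \<le> k" "j \<le> k"
  shows "cycle_plus_K1_E (Suc k) i j \<longleftrightarrow>
    j = Suc i \<or> i = Suc j \<or> (i = 0 \<and> j = k) \<or> (i = k \<and> j = 0)"
proof -
  have "Suc l mod Suc k = (if l = k then 0 else Suc l)" if "l \<le> k" for l
    using that by auto
  then show ?thesis
    using assms unfolding cycle_plus_K1_E_def by auto
qed

lemma set_eq_insert_last_butlast: "xs \<noteq> [] \<Longrightarrow> set xs = insert (last xs) (set (butlast xs))"
  by (metis append_butlast_last_id set_append Un_insert_right empty_set list.simps(15) sup_bot.right_neutral)

definition induced_path :: "'a set \<Rightarrow> ('a \<Rightarrow> 'a \<Rightarrow> bool) \<Rightarrow> 'a list \<Rightarrow> bool" where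
  "induced_path V E xs \<longleftrightarrow> set xs \<subseteq> V \<and> distinct xs \<and>
     (\<forall>i<length xs. \<forall>j<length xs. E (xs ! i) (xs ! j) \<longleftrightarrow> i = Suc j \<or> j = Suc i)"

context simple_graph
begin

lemma induced_path_Cons:
  assumes path: "induced_path V E xs" and "xs \<noteq> []" "a \<notin> set xs"
    and "E a (hd xs)" "\<forall>y\<in>set (tl xs). \<not> E a y"
  shows "induced_path V E (a # xs)"
proof -
  have "E a (xs ! j) \<longleftrightarrow> j = 0" if "j < length xs" for j
    using assms that by (cases j) (auto simp: hd_conv_nth nth_tl[symmetric])
  then show ?thesis
    using assms adj_in_V unfolding induced_path_def
    by (auto simp: nth_Cons less_Suc_eq_0_disj adj_sym[of _ a])
qed

lemma induced_path_rev: "induced_path V E (rev xs) \<longleftrightarrow> induced_path V E xs"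
proof -
  have "induced_path V E (rev xs)" if "induced_path V E xs" for xs :: "'a list"
    using that unfolding induced_path_def by (auto simp: rev_nth)
  then show ?thesis by (metis rev_rev_ident)
qed

lemma induced_path_snoc:
  assumes "induced_path V E xs" "xs \<noteq> []" "q \<notin> set xs"
    and "E (last xs) q" "\<forall>y\<in>set (butlast xs). \<not> E y q"
  shows "induced_path V E (xs @ [q])"
proof -
  have "tl (rev xs) = rev (butlast xs)"
    by (metis butlast_rev rev_rev_ident)
  then have "induced_path V E (q # rev xs)"
    using induced_path_Cons[of "rev xs" q] assms by (simp add: induced_path_rev hd_rev adj_sym[of q])
  then show ?thesis
    by (metis induced_path_rev rev_rev_ident rev.simps(2))
qed

lemma induced_path_tl:
  assumes "induced_path V E xs"
  shows "induced_path V E (tl xs)"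
proof (cases xs)
  case (Cons x ys)
  have path_adj: "\<forall>i<length xs. \<forall>j<length xs. E (xs ! i) (xs ! j) \<longleftrightarrow> i = Suc j \<or> j = Suc i"
    using assms unfolding induced_path_def by blast
  have "E (ys ! i) (ys ! j) \<longleftrightarrow> i = Suc j \<or> j = Suc i" if "i < length ys" "j < length ys" for i j
    using path_adj[rule_format, of "Suc i" "Suc j"] that Cons by simp
  then show ?thesis
    using assms unfolding Cons induced_path_def by auto
qed (simp add: induced_path_def)

lemma has_induced_cycle_plus_K1:
  assumes path: "induced_path V E xs" and "q \<notin> set xs" "{y \<in> set xs. E q y} = {hd xs, last xs}"
    and "z \<in> V" "z \<notin> set (q # xs)" "\<forall>y\<in>set (q # xs). \<not> E z y"
  shows "has_induced V E (cycle_plus_K1_V (Suc (length xs))) (cycle_plus_K1_E (Suc (length xs)))"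
proof -
  let ?k = "length xs"
  have "xs \<noteq> []"
    using assms(3) by auto
  then have "q \<in> V"
    using assms(3) adj_in_V by blast
  have path_adj: "E (xs ! i) (xs ! j) \<longleftrightarrow> i = Suc j \<or> j = Suc i" if "i < ?k" "j < ?k" for i j
    using path that unfolding induced_path_def by blast
  have nbrs_q: "E (xs ! i) q \<longleftrightarrow> i = 0 \<or> i = ?k - 1" if "i < ?k" for i
  proof -
    have "E (xs ! i) q \<longleftrightarrow> xs ! i \<in> {hd xs, last xs}"
      using assms(3) that by (simp add: set_eq_iff adj_sym[of q]) (metis nth_mem)
    also have "\<dots> \<longleftrightarrow> xs ! i = xs ! 0 \<or> xs ! i = xs ! (?k - 1)"
      using \<open>xs \<noteq> []\<close> by (simp add: hd_conv_nth last_conv_nth)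
    also have "\<dots> \<longleftrightarrow> i = 0 \<or> i = ?k - 1"
      using path that \<open>xs \<noteq> []\<close> unfolding induced_path_def by (simp add: nth_eq_iff_index_eq)
    finally show ?thesis .
  qed
  let ?f = "(!) (xs @ [q, z])"
  show ?thesis
    unfolding has_induced_def cycle_plus_K1_V_def
  proof (intro exI[of _ ?f] conjI ballI)
    have "distinct (xs @ [q, z])"
      using assms path unfolding induced_path_def by auto
    then show "inj_on ?f {0..Suc ?k}"
      by (rule inj_on_nth) auto
    have "set (xs @ [q, z]) \<subseteq> V"
      using path \<open>q \<in> V\<close> \<open>z \<in> V\<close> unfolding induced_path_def by auto
    moreover have "?f ` {0..Suc ?k} \<subseteq> set (xs @ [q, z])"
      by (rule image_subsetI, rule nth_mem) auto
    ultimately show "?f ` {0..Suc ?k} \<subseteq> V"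
      by blast
  next
    fix i j assume ij: "i \<in> {0..Suc ?k}" "j \<in> {0..Suc ?k}"
    then consider "i < ?k" "j < ?k" | "i < ?k" "j = ?k" | "i = ?k" "j < ?k" | "i = ?k" "j = ?k"
      | "i = Suc ?k \<or> j = Suc ?k"
      by fastforce
    then show "cycle_plus_K1_E (Suc ?k) i j \<longleftrightarrow> E (?f i) (?f j)"
    proof cases
      case 1
      then show ?thesis using path_adj by (auto simp: cycle_plus_K1_E_iff nth_append)
    next
      case 2
      then show ?thesis using nbrs_q by (auto simp: cycle_plus_K1_E_iff nth_append)
    next
      case 3
      then show ?thesis using nbrs_q adj_sym[of q] by (auto simp: cycle_plus_K1_E_iff nth_append)
    next
      case 4
      then show ?thesis using \<open>xs \<noteq> []\<close> by (simp add: cycle_plus_K1_E_iff nth_append)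
    next
      case 5
      have "?f i \<in> set (xs @ [q, z])" "?f j \<in> set (xs @ [q, z])"
        using ij by (intro nth_mem; simp)+
      moreover have "\<forall>y\<in>set (xs @ [q, z]). \<not> E z y \<and> \<not> E y z"
        using assms(6) adj_sym[of z] by auto
      moreover have "?f (Suc ?k) = z"
        by (simp add: nth_append)
      ultimately have "\<not> E (?f i) (?f j)"
        using 5 by metis
      moreover have "\<not> cycle_plus_K1_E (Suc ?k) i j"
        using 5 unfolding cycle_plus_K1_E_def by auto
      ultimately show ?thesis
        by simp
    qed
  qed
qed

lemma private_neighbour_of_path_end:
  assumes not_nested: "\<not> (\<exists>v\<in>V. \<exists>w\<in>V. closed_nbhd V E v \<subset> closed_nbhd V E w)"
    and path: "induced_path V E xs" and "3 \<le> length xs"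
  shows "\<exists>q. E (last xs) q \<and> \<not> E (last (butlast xs)) q \<and> q \<notin> set xs"
proof -
  obtain u u' t zs where rev_xs: "rev xs = u # u' # t # zs"
    using \<open>3 \<le> length xs\<close> by (metis Suc_le_length_iff numeral_3_eq_3 length_rev)
  then have last: "last xs = u" "last (butlast xs) = u'"
    by (auto simp: butlast_append)
  have rev_path: "induced_path V E (rev xs)"
    using path induced_path_rev by blast
  then have "E u u'" "E u' t" "\<not> E u t" "t \<noteq> u" "u \<in> V" "u' \<in> V"
    unfolding rev_xs induced_path_def by (force simp: adj_sym[of u'])+
  then have "t \<in> closed_nbhd V E u' - closed_nbhd V E u" "u \<in> closed_nbhd V E u'"
    using adj_in_V unfolding closed_nbhd_def by (auto simp: adj_sym[of u])
  then obtain q where q: "q \<in> closed_nbhd V E u - closed_nbhd V E u'"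
    using not_nested \<open>u \<in> V\<close> \<open>u' \<in> V\<close> by blast
  then have "E u q" "\<not> E u' q" "q \<noteq> u'"
    using \<open>u \<in> closed_nbhd V E u'\<close> unfolding closed_nbhd_def by auto
  moreover have "q \<notin> set xs"
  proof
    assume "q \<in> set xs"
    then obtain k where k: "k < length (rev xs)" "q = rev xs ! k"
      by (metis in_set_conv_nth set_rev)
    have "0 < length (rev xs)"
      using rev_xs by simp
    then have "\<forall>j<length (rev xs). E (rev xs ! 0) (rev xs ! j) \<longleftrightarrow> 0 = Suc j \<or> j = Suc 0"
      using rev_path unfolding induced_path_def by blast
    then have "k = 1"
      using k \<open>E u q\<close> rev_xs by simp
    then show False
      using k \<open>q \<noteq> u'\<close> rev_xs by simp
  qed
  ultimately show ?thesis
    using last by blast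
qed

end

locale hole_K1_free_claw_free_graph = simple_graph +
  assumes claw_free: "claw_free E"
    and no_hole_K1: "\<forall>n. \<not> has_induced V E (cycle_plus_K1_V (n + 4)) (cycle_plus_K1_E (n + 4))"
begin

lemma long_hole_dominates:
  assumes "induced_path V E xs" "3 \<le> length xs"
    and "q \<notin> set xs" "{y \<in> set xs. E q y} = {hd xs, last xs}"
    and "z \<in> V" "z \<notin> set (q # xs)"
  shows "\<exists>y\<in>set (q # xs). E z y"
proof (rule ccontr)
  assume "\<not> ?thesis"
  then have "has_induced V E (cycle_plus_K1_V (Suc (length xs))) (cycle_plus_K1_E (Suc (length xs)))"
    using has_induced_cycle_plus_K1 assms by blast
  moreover have "Suc (length xs) = (length xs - 3) + 4"
    using \<open>3 \<le> length xs\<close> by simp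
  ultimately show False
    using no_hole_K1 by metis
qed

lemma private_neighbour_misses_path:
  assumes "induced_path V E xs" "q \<notin> set xs"
    and "E (last xs) q" "\<not> E (last (butlast xs)) q"
    and "z \<in> V" "z \<notin> set (q # xs)" "\<forall>y\<in>set (q # xs). \<not> E z y"
  shows "\<forall>y\<in>set (butlast xs). \<not> E q y"
  using assms
proof (induction xs)
  case Nil
  then show ?case by simp
next
  case (Cons a xs)
  show ?case
  proof (cases "\<exists>y\<in>set (butlast xs). E q y")
    case True
    then have "xs \<noteq> []" "butlast xs \<noteq> []"
      by auto
    then have "\<forall>y\<in>set (butlast xs). \<not> E q y"
      using Cons.IH Cons.prems induced_path_tl[OF Cons.prems(1)] by simp
    with True show ?thesis
      by blast
  next
    case False
    show ?thesis
    proof (rule ccontr)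
      assume "\<not> ?thesis"
      then have "xs \<noteq> []" "E q a"
        using False by (auto split: if_splits)
      have "a \<noteq> last (butlast (a # xs))"
        using Cons.prems(4) \<open>E q a\<close> \<open>xs \<noteq> []\<close> by (auto simp: adj_sym[of q])
      then have "butlast xs \<noteq> []"
        using \<open>xs \<noteq> []\<close> by auto
      then have "0 < length (butlast xs)"
        by (rule iffD2[OF length_greater_0_conv])
      then have "3 \<le> length (a # xs)"
        by simp
      moreover have "set xs = insert (last xs) (set (butlast xs))"
        using \<open>xs \<noteq> []\<close> by (rule set_eq_insert_last_butlast)
      then have "{y \<in> set (a # xs). E q y} = {hd (a # xs), last (a # xs)}"
        using False \<open>E q a\<close> Cons.prems(3) \<open>xs \<noteq> []\<close> by (auto simp: adj_sym[of q])
      ultimately show False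
        using long_hole_dominates Cons.prems by blast
    qed
  qed
qed

lemma end_neighbour_not_adj_new_head:
  assumes path: "induced_path V E xs" "2 \<le> length xs"
    and q: "q \<notin> set xs" "E (last xs) q" "\<forall>y\<in>set (butlast xs). \<not> E q y"
    and a: "a \<notin> set xs" "E a (hd xs)" "\<forall>y\<in>set (tl xs). \<not> E a y"
    and z: "z \<in> V" "z \<notin> set (q # a # xs)" "\<forall>y\<in>set (q # a # xs). \<not> E z y"
  shows "\<not> E q a"
proof
  assume "E q a"
  have "xs \<noteq> []"
    using path by auto
  have "induced_path V E (a # xs)"
    using induced_path_Cons path a \<open>xs \<noteq> []\<close> by blast
  moreover have "set xs = insert (last xs) (set (butlast xs))"
    using \<open>xs \<noteq> []\<close> by (rule set_eq_insert_last_butlast)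
  then have "{y \<in> set (a # xs). E q y} = {hd (a # xs), last (a # xs)}"
    using \<open>E q a\<close> q \<open>xs \<noteq> []\<close> by (auto simp: adj_sym[of q])
  moreover have "q \<noteq> a"
    using \<open>E q a\<close> by auto
  ultimately show False
    using long_hole_dominates[of "a # xs" q z] path q z by auto
qed

lemma end_neighbour_misses_pendant_edge:
  assumes path: "induced_path V E xs" "2 \<le> length xs"
    and q: "q \<notin> set xs" "E (last xs) q" "\<forall>y\<in>set (butlast xs). \<not> E q y"
    and a: "a \<notin> set xs" "E a (hd xs)" "\<forall>y\<in>set (tl xs). \<not> E a y"
    and b: "b \<notin> set (a # xs)" "E b a" "\<forall>y\<in>set xs. \<not> E b y"
    and z: "z \<in> V" "z \<notin> set (a # b # xs)" "\<forall>y\<in>set (a # b # xs). \<not> E z y"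
  shows "\<not> E q a \<and> \<not> E q b"
proof -
  have "xs \<noteq> []"
    using path by auto
  have "last xs \<in> set (tl xs)"
    using path by (cases xs) auto
  then have "last xs \<in> set xs"
    using \<open>xs \<noteq> []\<close> by simp
  have last: "last xs \<noteq> a" "last xs \<noteq> b" "last xs \<noteq> z" "\<not> E (last xs) a" "\<not> E (last xs) b"
    "\<not> E (last xs) z"
    using a b z \<open>last xs \<in> set (tl xs)\<close> \<open>last xs \<in> set xs\<close>
    by (auto simp: adj_sym[of "last xs"])
  have claw_qz: "\<not> E q z" if "E q c" "c \<in> {a, b}" for c
    using claw_freeD[OF claw_free, of q "last xs" c z] that last z q a b by (auto simp: adj_sym[of q] adj_sym[of _ z])
  have "\<not> E q a"
    using claw_qz[of a] end_neighbour_not_adj_new_head[OF path q a, of z] z by (auto simp: adj_sym[of z q])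
  moreover have "\<not> E q b"
  proof
    assume "E q b"
    have "q \<noteq> a"
      using q(2) last(4) by auto
    have "induced_path V E (a # xs)"
      using induced_path_Cons path a \<open>xs \<noteq> []\<close> by blast
    moreover have "\<forall>y\<in>set (butlast (a # xs)). \<not> E q y"
      using q(3) \<open>\<not> E q a\<close> \<open>xs \<noteq> []\<close> by auto
    ultimately have "\<not> E q b"
      using end_neighbour_not_adj_new_head[of "a # xs" q b z] path q \<open>q \<noteq> a\<close> b z
        claw_qz[of b] \<open>E q b\<close> \<open>xs \<noteq> []\<close> by (auto simp: adj_sym[of z q] adj_sym[of b a])
    then show False
      using \<open>E q b\<close> by blast
  qed
  ultimately show ?thesis ..
qed

end

locale net_counterexample = hole_K1_free_claw_free_graph +
  fixes v1 v2 v3 w1 w2 w3 :: 'a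
  assumes nbhds_not_nested: "\<not> (\<exists>v\<in>V. \<exists>w\<in>V. closed_nbhd V E v \<subset> closed_nbhd V E w)"
    and net_distinct: "distinct [v1, v2, v3, w1, w2, w3]"
    and net_edges: "E v1 v2" "E v1 v3" "E v2 v3" "E v1 w1" "E v2 w2" "E v3 w3"
    and net_non_edges: "\<not> E v1 w2" "\<not> E v1 w3" "\<not> E v2 w1" "\<not> E v2 w3" "\<not> E v3 w1"
      "\<not> E v3 w2" "\<not> E w1 w2" "\<not> E w1 w3" "\<not> E w2 w3"
begin

definition escaping_path :: "'a list \<Rightarrow> bool" where
  "escaping_path xs \<longleftrightarrow> induced_path V E xs \<and> (\<exists>ys. xs = v1 # w1 # ys) \<and>
     (\<forall>y\<in>set xs. y \<notin> {v2, v3, w2, w3} \<and> \<not> E y w2 \<and> \<not> E y w3) \<and>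
     (\<forall>y\<in>set (tl xs). \<not> E y v2 \<and> \<not> E y v3)"

lemma escaping_path_start: "escaping_path [v1, w1]"
proof -
  have "induced_path V E [w1]"
    using net_edges adj_in_V unfolding induced_path_def by auto
  then have "induced_path V E [v1, w1]"
    using induced_path_Cons[of "[w1]" v1] net_edges net_distinct by auto
  then show ?thesis
    using net_distinct net_non_edges unfolding escaping_path_def by (auto simp: adj_sym[of w1])
qed

lemma escaping_path_snoc:
  assumes "escaping_path xs"
  shows "\<exists>q. escaping_path (xs @ [q])"
proof -
  obtain ys where xs: "xs = v1 # w1 # ys" and path: "induced_path V E xs"
    and far: "\<forall>y\<in>set xs. y \<notin> {v2, v3, w2, w3} \<and> \<not> E y w2 \<and> \<not> E y w3"
    and far_tl: "\<forall>y\<in>set (tl xs). \<not> E y v2 \<and> \<not> E y v3"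
    using assms unfolding escaping_path_def by blast
  \<comment> \<open>v2 serves as a vertex before v1, so that the closed neighbourhoods of the last two
    vertices differ also when xs = [v1, w1]\<close>
  have "induced_path V E (v2 # xs)"
    using induced_path_Cons[OF path] xs far far_tl net_edges by (auto simp: adj_sym[of v2])
  then obtain q where q: "E (last xs) q" "\<not> E (last (butlast xs)) q" "q \<notin> set (v2 # xs)"
    using private_neighbour_of_path_end[OF nbhds_not_nested, of "v2 # xs"] xs by auto
  have "last xs \<in> set (tl xs)"
    using xs by simp
  then have last: "\<not> E (last xs) w2" "\<not> E (last xs) w3" "\<not> E (last xs) v2" "\<not> E (last xs) v3"
    "last xs \<noteq> w2" "last xs \<noteq> w3"
    using far far_tl xs by auto
  have q_new: "q \<noteq> v2" "q \<noteq> v3" "q \<noteq> w2" "q \<noteq> w3"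
    using q(1,3) last by auto
  obtain z where z: "z \<in> {w2, w3}" "\<not> E q z"
    using claw_freeD[OF claw_free, of q "last xs" w2 w3] q(1) last net_distinct net_non_edges by (auto simp: adj_sym[of q])
  have "z \<in> V" "z \<notin> set (q # xs)" "\<forall>y\<in>set (q # xs). \<not> E z y"
    using z far net_edges q_new adj_in_V by (auto simp: adj_sym[of z])
  then have misses_path: "\<forall>y\<in>set (butlast xs). \<not> E q y"
    using private_neighbour_misses_path[OF path _ q(1,2)] q(3) by auto
  have "2 \<le> length xs" "q \<notin> set xs" "hd xs = v1"
    using xs q(3) by auto
  moreover have "\<forall>y\<in>set xs. \<not> E w2 y \<and> \<not> E w3 y" "\<forall>y\<in>set (tl xs). \<not> E v2 y \<and> \<not> E v3 y"
    using far far_tl adj_sym by blast+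
  ultimately have "\<not> E q v2 \<and> \<not> E q w2" "\<not> E q v3 \<and> \<not> E q w3"
    using end_neighbour_misses_pendant_edge[OF path _ _ q(1) misses_path, of v2 w2 w3]
      end_neighbour_misses_pendant_edge[OF path _ _ q(1) misses_path, of v3 w3 w2]
      far net_distinct net_edges net_non_edges adj_in_V
    by (auto simp: adj_sym[of v1] adj_sym[of w3 v2] adj_sym[of w3 w2] adj_sym[of w2 v3] adj_sym[of w2 v2] adj_sym[of w3 v3])
  moreover have "induced_path V E (xs @ [q])"
    using induced_path_snoc[OF path] xs q misses_path by (auto simp: adj_sym[of q])
  ultimately have "escaping_path (xs @ [q])"
    using far far_tl q last xs unfolding escaping_path_def by auto
  then show ?thesis ..
qed

lemma escaping_path_length_le: "escaping_path xs \<Longrightarrow> length xs \<le> card V"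
  unfolding escaping_path_def induced_path_def
  by (metis distinct_card card_mono finite_V)

lemma escaping_paths_unbounded: "\<exists>xs. escaping_path xs \<and> n \<le> length xs"
proof (induction n)
  case 0
  then show ?case
    using escaping_path_start by blast
next
  case (Suc n)
  then obtain xs where "escaping_path xs" "n \<le> length xs"
    by blast
  then obtain q where "escaping_path (xs @ [q])"
    using escaping_path_snoc by blast
  then show ?case
    using \<open>n \<le> length xs\<close> by force
qed

end

theorem mainTheorem17:
  fixes V :: "'a set" and E :: "'a \<Rightarrow> 'a \<Rightarrow> bool"
  assumes "graph V E"
    and "\<forall>v\<in>V. unit_interval_on (closed_nbhd V E v) E"
    and "\<forall>n::nat. \<not> has_induced V E (cycle_plus_K1_V (n + 4)) (cycle_plus_K1_E (n + 4))"
    and "\<not> (\<exists>v\<in>V. \<exists>w\<in>V. closed_nbhd V E v \<subset> closed_nbhd V E w)"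
  shows "\<not> has_induced V E net_V net_E"
proof
  assume "has_induced V E net_V net_E"
  then obtain f where f: "inj_on f {0..5}" "\<forall>i\<in>{0..5}. \<forall>j\<in>{0..5}. net_E i j \<longleftrightarrow> E (f i) (f j)"
    unfolding has_induced_def net_V_def by blast
  have "{0..<6} = {0..5::nat}"
    by auto
  then have "distinct (map f [0..<6])"
    using f(1) by (simp add: distinct_map)
  then have "distinct [f 0, f 1, f 2, f 3, f 4, f 5]"
    by (simp add: upt_rec numeral_eq_Suc)
  moreover have "E (f i) (f j) \<longleftrightarrow> {i, j} \<in> {{0, 1}, {0, 2}, {1, 2}, {0, 3}, {1, 4}, {2, 5}}"
    if "i \<le> 5" "j \<le> 5" for i j
    using f(2) that unfolding net_E_def by auto
  ultimately interpret net_counterexample V E "f 0" "f 1" "f 2" "f 3" "f 4" "f 5"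
    using assms claw_free_if_unit_interval_nbhds by unfold_locales (auto simp: doubleton_eq_iff)
  obtain xs where "escaping_path xs" "Suc (card V) \<le> length xs"
    using escaping_paths_unbounded by blast
  then show False
    using escaping_path_length_le by fastforce
qed

end
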